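(* Let $\mathsf{L}$ be a logic, $\mathcal{C}$ a class of $\mathsf{L}$-models, and $\Theta=(\Theta_M)_{M\in\mathcal{C}}$ an $(\mathsf{L},\mathcal{C})$-pair. Then for every fragment $\mathsf{L}'$ of $\mathsf{L}$ and every $\mathcal{C}$-sample $\mathcal{S}=(\mathcal{P},\mathcal{N})$, the sample $\mathcal{S}$ is $\mathsf{L}'$-separable if and only if there is an $\mathcal{S}$-separating $\mathsf{L}'$-formula $\varphi$ with $\mathsf{sz}(\varphi)\le n^{\mathcal{S}}_{\Theta}:=\sum_{\tau\in\mathcal{T}}\prod_{M\in\mathcal{P}\cup\mathcal{N}}|\mathsf{SEM}_M(\tau)|$.
   Context: A logic $\mathsf{L}$ is given by a syntax $(\mathcal{T},\mathcal{T}_f,\mathsf{Op},(\tau_o)_{o\in\mathsf{Op}},T)$: $\mathcal{T}$ is a non-empty finite set of types, $\emptyset\neq\mathcal{T}_f\subseteq\mathcal{T}$ is the set of final types, $\mathsf{Op}=\mathsf{Op}_0\uplus\mathsf{Op}_1\uplus\mathsf{Op}_2$ is a set of operators ($\mathsf{Op}_i$ = operators of arity $i$) with $\mathsf{Op}_0\neq\emptyset$; each operator $o$ has a type $\tau_o\in\mathcal{T}$, and for each argument position $i$ of $o$ a set $T(o,i)\subseteq\mathcal{T}$ of allowed argument types. The sets $\mathsf{Fm}_{\mathsf{L}}(\tau)$ of $\mathsf{L}$-formulas of type $\tau$ are defined inductively: each $o\in\mathsf{Op}_0$ is a formula of type $\tau_o$; if $o\in\mathsf{Op}_1$ and $\varphi_1$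 has a type in $T(o,1)$ then $o(\varphi_1)$ has type $\tau_o$; if $o\in\mathsf{Op}_2$ and $\varphi_i$ has a type in $T(o,i)$ ($i=1,2$) then $o(\varphi_1,\varphi_2)$ has type $\tau_o$. For $X\subseteq\mathcal{T}$, $\mathsf{Fm}_{\mathsf{L}}(X)=\bigcup_{\tau\in X}\mathsf{Fm}_{\mathsf{L}}(\tau)$; $\mathsf{Fm}_{\mathsf{L}}=\mathsf{Fm}_{\mathsf{L}}(\mathcal{T})$ and the final formulas are $\mathsf{Fm}^f_{\mathsf{L}}=\mathsf{Fm}_{\mathsf{L}}(\mathcal{T}_f)$. A fragment $\mathsf{L}'$ of $\mathsf{L}$ is a logic with the same syntax except that its operator set is some $\mathsf{Op}'\subseteq\mathsf{Op}$. The set $\mathsf{Sub}(\varphi)$ of subformulas is defined inductively ($\mathsf{Sub}(o)=\{o\}$, $\mathsf{Sub}(o(\varphi_1))=\{o(\varphi_1)\}\cup\mathsf{Sub}(\varphi_1)$, $\mathsf{Sub}(o(\varphi_1,\varphi_2))=\{o(\varphi_1,\varphi_2)\}\cup\mathsf{Sub}(\varphi_1)\cup\mathsf{Sub}(\varphi_2)$), and the size is $\mathsf{sz}(\varphi)=|\mathsf{Sub}(\varphi)|$ (number of distinct subformulas). An $\mathsf{L}$-model is a structure $M$ together with a satisfaction relation $M\models\varphi$ for final $\mathsf{L}$-formulas $\varphi$; a class of $\mathsf{L}$-models is a set of $\mathsf{L}$-models. A $\mathcal{C}$-sample is a pair $(\mathcal{P},\mathcal{N})$ of finite subsets of $\mathcal{C}$.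 A final $\mathsf{L}'$-formula $\varphi$ is $\mathcal{S}$-separating if $M\models\varphi$ for all $M\in\mathcal{P}$ and $M\not\models\varphi$ for all $M\in\mathcal{N}$; $\mathcal{S}$ is $\mathsf{L}'$-separable if such a formula exists. For an $\mathsf{L}$-model $M$, an $(\mathsf{L},M)$-pair $(\mathsf{SEM}_M,\mathsf{sem}_M)$ consists of a finite set $\mathsf{SEM}_M=\bigcup_{\tau\in\mathcal{T}}\mathsf{SEM}_M(\tau)$ with the $\mathsf{SEM}_M(\tau)$ pairwise disjoint, and a map $\mathsf{sem}_M:\mathsf{Fm}_{\mathsf{L}}\to\mathsf{SEM}_M$ with $\mathsf{sem}_M(\varphi)\in\mathsf{SEM}_M(\tau)$ whenever $\varphi\in\mathsf{Fm}_{\mathsf{L}}(\tau)$; write $\mathsf{SEM}_M(X)=\bigcup_{\tau\in X}\mathsf{SEM}_M(\tau)$. It captures the $\mathsf{L}$-semantics if for every $\tau\in\mathcal{T}$ and all final $\varphi,\varphi'$ of type $\tau$, $\mathsf{sem}_M(\varphi)=\mathsf{sem}_M(\varphi')$ implies ($M\models\varphi$ iff $M\models\varphi'$). It satisfies the inductive property if for every $o\in\mathsf{Op}_1$ there is a function $\mathsf{sem}^o_M:\mathsf{SEM}_M(T(o,1))\to\mathsf{SEM}_M(\tau_o)$ with $\mathsf{sem}_M(o(\varphi_1))=\mathsf{sem}^o_M(\mathsf{sem}_M(\varphi_1))$ for all $\varphi_1\in\mathsf{Fm}_{\mathsf{L}}(T(o,1))$, and for every $o\in\mathsf{Op}_2$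 there is a function $\mathsf{sem}^o_M:\mathsf{SEM}_M(T(o,1))\times\mathsf{SEM}_M(T(o,2))\to\mathsf{SEM}_M(\tau_o)$ with $\mathsf{sem}_M(o(\varphi_1,\varphi_2))=\mathsf{sem}^o_M(\mathsf{sem}_M(\varphi_1),\mathsf{sem}_M(\varphi_2))$ for all $\varphi_i\in\mathsf{Fm}_{\mathsf{L}}(T(o,i))$. An $(\mathsf{L},\mathcal{C})$-pair is a family $\Theta=(\Theta_M)_{M\in\mathcal{C}}$ where each $\Theta_M=(\mathsf{SEM}_M,\mathsf{sem}_M)$ is an $(\mathsf{L},M)$-pair that both captures the $\mathsf{L}$-semantics and satisfies the inductive property. *)

theory Defs
  imports Main "HOL-Library.FuncSet"
begin

datatype 'o fm = F0 'o | F1 'o "'o fm" | F2 'o "'o fm" "'o fm"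

text \<open>A syntax: types, final types, operators of arity 0/1/2, the type of each
operator, and the allowed argument types T(op,i) (argument positions i = 1, 2).\<close>
record ('t, 'o) logic =
  Tys :: "'t set"
  FinTys :: "'t set"
  Ops0 :: "'o set"
  Ops1 :: "'o set"
  Ops2 :: "'o set"
  tyOf :: "'o \<Rightarrow> 't"
  argTys :: "'o \<Rightarrow> nat \<Rightarrow> 't set"

definition Ops :: "('t, 'o) logic \<Rightarrow> 'o set" where
  "Ops L = Ops0 L \<union> Ops1 L \<union> Ops2 L"

definition is_logic :: "('t, 'o) logic \<Rightarrow> bool" where
  "is_logic L \<longleftrightarrow>
     finite (Tys L) \<and> Tys L \<noteq> {} \<and>
     FinTys L \<noteq> {} \<and> FinTys L \<subseteq> Tys L \<and>
     Ops0 L \<inter> Ops1 L = {} \<and> Ops0 L \<inter> Ops2 L = {} \<and> Ops1 L \<inter> Ops2 L = {} \<and>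
     Ops0 L \<noteq> {} \<and>
     (\<forall>op \<in> Ops L. tyOf L op \<in> Tys L) \<and>
     (\<forall>op \<in> Ops1 L. argTys L op 1 \<subseteq> Tys L) \<and>
     (\<forall>op \<in> Ops2 L. argTys L op 1 \<subseteq> Tys L \<and> argTys L op 2 \<subseteq> Tys L)"

definition fragment :: "('t, 'o) logic \<Rightarrow> ('t, 'o) logic \<Rightarrow> bool" where
  "fragment L' L \<longleftrightarrow> is_logic L' \<and>
     Tys L' = Tys L \<and> FinTys L' = FinTys L \<and> tyOf L' = tyOf L \<and> argTys L' = argTys L \<and>
     Ops0 L' \<subseteq> Ops0 L \<and> Ops1 L' \<subseteq> Ops1 L \<and> Ops2 L' \<subseteq> Ops2 L"

fun fty :: "('t, 'o) logic \<Rightarrow> 'o fm \<Rightarrow> 't" where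
  "fty L (F0 op) = tyOf L op"
| "fty L (F1 op a) = tyOf L op"
| "fty L (F2 op a b) = tyOf L op"

fun wf :: "('t, 'o) logic \<Rightarrow> 'o fm \<Rightarrow> bool" where
  "wf L (F0 op) = (op \<in> Ops0 L)"
| "wf L (F1 op a) = (op \<in> Ops1 L \<and> wf L a \<and> fty L a \<in> argTys L op 1)"
| "wf L (F2 op a b) = (op \<in> Ops2 L \<and> wf L a \<and> fty L a \<in> argTys L op 1
                       \<and> wf L b \<and> fty L b \<in> argTys L op 2)"

definition Fm :: "('t, 'o) logic \<Rightarrow> 't \<Rightarrow> 'o fm set" where
  "Fm L \<tau> = {\<phi>. wf L \<phi> \<and> fty L \<phi> = \<tau>}"

definition FmS :: "('t, 'o) logic \<Rightarrow> 't set \<Rightarrow> 'o fm set" where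
  "FmS L X = (\<Union>\<tau>\<in>X. Fm L \<tau>)"

definition FinFm :: "('t, 'o) logic \<Rightarrow> 'o fm set" where
  "FinFm L = FmS L (FinTys L)"

fun Sub :: "'o fm \<Rightarrow> 'o fm set" where
  "Sub (F0 op) = {F0 op}"
| "Sub (F1 op a) = insert (F1 op a) (Sub a)"
| "Sub (F2 op a b) = insert (F2 op a b) (Sub a \<union> Sub b)"

definition sz :: "'o fm \<Rightarrow> nat" where
  "sz \<phi> = card (Sub \<phi>)"

text \<open>Separation. Models have type 'm with satisfaction relation sat
(only consulted on final formulas).\<close>
definition separating ::
  "('t, 'o) logic \<Rightarrow> ('m \<Rightarrow> 'o fm \<Rightarrow> bool) \<Rightarrow> 'm set \<Rightarrow> 'm set \<Rightarrow> 'o fm \<Rightarrow> bool" where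
  "separating L' sat P N \<phi> \<longleftrightarrow> \<phi> \<in> FinFm L' \<and>
     (\<forall>M\<in>P. sat M \<phi>) \<and> (\<forall>M\<in>N. \<not> sat M \<phi>)"

definition separable ::
  "('t, 'o) logic \<Rightarrow> ('m \<Rightarrow> 'o fm \<Rightarrow> bool) \<Rightarrow> 'm set \<Rightarrow> 'm set \<Rightarrow> bool" where
  "separable L' sat P N \<longleftrightarrow> (\<exists>\<phi>. separating L' sat P N \<phi>)"

definition SEMS :: "('t \<Rightarrow> 's set) \<Rightarrow> 't set \<Rightarrow> 's set" where
  "SEMS SEMM X = (\<Union>\<tau>\<in>X. SEMM \<tau>)"

text \<open>(L,M)-pair: SEM_M given typewise, sem_M a map on all formulas.\<close>
definition LM_pair :: "('t, 'o) logic \<Rightarrow> ('t \<Rightarrow> 's set) \<Rightarrow> ('o fm \<Rightarrow> 's) \<Rightarrow> bool" where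
  "LM_pair L SEMM semM \<longleftrightarrow>
     finite (SEMS SEMM (Tys L)) \<and>
     (\<forall>\<tau>\<in>Tys L. \<forall>\<tau>'\<in>Tys L. \<tau> \<noteq> \<tau>' \<longrightarrow> SEMM \<tau> \<inter> SEMM \<tau>' = {}) \<and>
     (\<forall>\<tau>\<in>Tys L. \<forall>\<phi>\<in>Fm L \<tau>. semM \<phi> \<in> SEMM \<tau>)"

definition captures ::
  "('t, 'o) logic \<Rightarrow> ('o fm \<Rightarrow> bool) \<Rightarrow> ('o fm \<Rightarrow> 's) \<Rightarrow> bool" where
  "captures L satM semM \<longleftrightarrow>
     (\<forall>\<tau>\<in>Tys L. \<forall>\<phi>\<in>Fm L \<tau> \<inter> FinFm L. \<forall>\<phi>'\<in>Fm L \<tau> \<inter> FinFm L.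
        semM \<phi> = semM \<phi>' \<longrightarrow> (satM \<phi> \<longleftrightarrow> satM \<phi>'))"

definition inductive_prop ::
  "('t, 'o) logic \<Rightarrow> ('t \<Rightarrow> 's set) \<Rightarrow> ('o fm \<Rightarrow> 's) \<Rightarrow> bool" where
  "inductive_prop L SEMM semM \<longleftrightarrow>
     (\<forall>op\<in>Ops1 L. \<exists>f. f \<in> SEMS SEMM (argTys L op 1) \<rightarrow> SEMM (tyOf L op) \<and>
        (\<forall>\<phi>1\<in>FmS L (argTys L op 1). semM (F1 op \<phi>1) = f (semM \<phi>1))) \<and>
     (\<forall>op\<in>Ops2 L. \<exists>f. (\<forall>x\<in>SEMS SEMM (argTys L op 1). \<forall>y\<in>SEMS SEMM (argTys L op 2).
                          f x y \<in> SEMM (tyOf L op)) \<and>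
        (\<forall>\<phi>1\<in>FmS L (argTys L op 1). \<forall>\<phi>2\<in>FmS L (argTys L op 2).
           semM (F2 op \<phi>1 \<phi>2) = f (semM \<phi>1) (semM \<phi>2)))"

definition LC_pair ::
  "('t, 'o) logic \<Rightarrow> 'm set \<Rightarrow> ('m \<Rightarrow> 'o fm \<Rightarrow> bool) \<Rightarrow>
   ('m \<Rightarrow> 't \<Rightarrow> 's set) \<Rightarrow> ('m \<Rightarrow> 'o fm \<Rightarrow> 's) \<Rightarrow> bool" where
  "LC_pair L C sat SEM sem \<longleftrightarrow>
     (\<forall>M\<in>C. LM_pair L (SEM M) (sem M) \<and> captures L (sat M) (sem M) \<and>
             inductive_prop L (SEM M) (sem M))"

definition size_bound ::
  "('t, 'o) logic \<Rightarrow> ('m \<Rightarrow> 't \<Rightarrow> 's set) \<Rightarrow> 'm set \<Rightarrow> 'm set \<Rightarrow> nat" where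
  "size_bound L SEM P N = (\<Sum>\<tau>\<in>Tys L. \<Prod>M\<in>P \<union> N. card (SEM M \<tau>))"

end

(*
  The profile of a formula is its type together with its semantic values in the models
  of P \<union> N; there are exactly n^S_Theta possible profiles. By the inductive property the
  profile of a compound formula depends only on its operator and the profiles of its
  arguments, and by the capturing property two final formulas with the same profile
  are satisfied by the same sample models. A subformula-closed set S of formulas with
  pairwise distinct profiles and maximal cardinality realizes every profile: otherwise
  a formula with a missing profile, built from members of S, could be added to S. The
  member of S sharing the profile of a separating formula is again separating, and all
  its subformulas lie in S, so its size is at most |S| \<le> n^S_Theta. Since a fragment
  inherits the (L,C)-pair and the bound, it suffices to treat L itself.
*)
theory Submission
  imports Defs
begin

lemma fty_fragment:
  assumes "fragment L' L" shows "fty L' = fty L"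
proof
  fix \<phi> show "fty L' \<phi> = fty L \<phi>"
    using assms by (cases \<phi>) (auto simp: fragment_def)
qed

lemma wf_fragment: "fragment L' L \<Longrightarrow> wf L' \<phi> \<Longrightarrow> wf L \<phi>"
  by (induction \<phi>) (auto simp: fragment_def fty_fragment)

lemma Fm_fragment_subset: "fragment L' L \<Longrightarrow> Fm L' \<tau> \<subseteq> Fm L \<tau>"
  by (auto simp: Fm_def fty_fragment wf_fragment)

lemma FmS_fragment_subset:
  assumes "fragment L' L" shows "FmS L' X \<subseteq> FmS L X"
  using Fm_fragment_subset[OF assms] unfolding FmS_def by blast

lemma FinFm_fragment_subset:
  assumes "fragment L' L" shows "FinFm L' \<subseteq> FinFm L"
  using FmS_fragment_subset[OF assms] assms by (simp add: FinFm_def fragment_def)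

lemma fty_in_Tys: "is_logic L \<Longrightarrow> wf L \<phi> \<Longrightarrow> fty L \<phi> \<in> Tys L"
  by (cases \<phi>) (auto simp: is_logic_def Ops_def)

lemma FinFm_iff: "\<phi> \<in> FinFm L \<longleftrightarrow> wf L \<phi> \<and> fty L \<phi> \<in> FinTys L"
  by (auto simp: FinFm_def FmS_def Fm_def)

lemma LM_pair_fragment:
  assumes "fragment L' L" "LM_pair L SEMM semM" shows "LM_pair L' SEMM semM"
proof -
  have Tys: "Tys L' = Tys L"
    using assms(1) by (simp add: fragment_def)
  show ?thesis
    using assms(2) Fm_fragment_subset[OF assms(1)] unfolding LM_pair_def Tys by blast
qed

lemma captures_fragment:
  assumes "fragment L' L" "captures L satM semM" shows "captures L' satM semM"
proof -
  have Tys: "Tys L' = Tys L"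
    using assms(1) by (simp add: fragment_def)
  show ?thesis
    using assms(2) Fm_fragment_subset[OF assms(1)] FinFm_fragment_subset[OF assms(1)]
    unfolding captures_def Tys by blast
qed

lemma inductive_prop_fragment:
  assumes frag: "fragment L' L" and ind: "inductive_prop L SEMM semM"
  shows "inductive_prop L' SEMM semM"
proof -
  have ops: "Ops1 L' \<subseteq> Ops1 L" "Ops2 L' \<subseteq> Ops2 L"
    and same: "argTys L' = argTys L" "tyOf L' = tyOf L"
    using frag by (auto simp: fragment_def)
  have FmS: "\<And>X. FmS L' X \<subseteq> FmS L X"
    using FmS_fragment_subset[OF frag] .
  show ?thesis
    unfolding inductive_prop_def same
  proof (intro conjI ballI)
    fix op assume "op \<in> Ops1 L'"
    then obtain f where "f \<in> SEMS SEMM (argTys L op 1) \<rightarrow> SEMM (tyOf L op)"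
      "\<forall>\<phi>1\<in>FmS L (argTys L op 1). semM (F1 op \<phi>1) = f (semM \<phi>1)"
      using ind ops unfolding inductive_prop_def by blast
    then show "\<exists>f. f \<in> SEMS SEMM (argTys L op 1) \<rightarrow> SEMM (tyOf L op) \<and>
        (\<forall>\<phi>1\<in>FmS L' (argTys L op 1). semM (F1 op \<phi>1) = f (semM \<phi>1))"
      using FmS by blast
  next
    fix op assume "op \<in> Ops2 L'"
    then obtain f where "\<forall>x\<in>SEMS SEMM (argTys L op 1). \<forall>y\<in>SEMS SEMM (argTys L op 2).
        f x y \<in> SEMM (tyOf L op)"
      "\<forall>\<phi>1\<in>FmS L (argTys L op 1). \<forall>\<phi>2\<in>FmS L (argTys L op 2).
         semM (F2 op \<phi>1 \<phi>2) = f (semM \<phi>1) (semM \<phi>2)"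
      using ind ops unfolding inductive_prop_def by blast
    then show "\<exists>f. (\<forall>x\<in>SEMS SEMM (argTys L op 1). \<forall>y\<in>SEMS SEMM (argTys L op 2).
        f x y \<in> SEMM (tyOf L op)) \<and>
      (\<forall>\<phi>1\<in>FmS L' (argTys L op 1). \<forall>\<phi>2\<in>FmS L' (argTys L op 2).
         semM (F2 op \<phi>1 \<phi>2) = f (semM \<phi>1) (semM \<phi>2))"
      using FmS by blast
  qed
qed

lemma LC_pair_fragment:
  "fragment L' L \<Longrightarrow> LC_pair L C sat SEM sem \<Longrightarrow> LC_pair L' C sat SEM sem"
  unfolding LC_pair_def
  using LM_pair_fragment captures_fragment inductive_prop_fragment by blast

lemma size_bound_fragment: "fragment L' L \<Longrightarrow> size_bound L' SEM P N = size_bound L SEM P N"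
  by (simp add: size_bound_def fragment_def)

lemma captures_sat_eq:
  assumes "is_logic L" "captures L satM semM" "\<phi> \<in> FinFm L" "wf L \<psi>"
    and "fty L \<psi> = fty L \<phi>" "semM \<psi> = semM \<phi>"
  shows "satM \<psi> \<longleftrightarrow> satM \<phi>"
proof -
  have "fty L \<phi> \<in> Tys L" "\<phi> \<in> Fm L (fty L \<phi>) \<inter> FinFm L" "\<psi> \<in> Fm L (fty L \<phi>) \<inter> FinFm L"
    using assms fty_in_Tys by (auto simp: FinFm_iff Fm_def)
  then show ?thesis
    using assms(2,6) unfolding captures_def by blast
qed

lemma inductive_prop_F1_cong:
  assumes "inductive_prop L SEMM semM" "op \<in> Ops1 L"
    and "\<phi> \<in> FmS L (argTys L op 1)" "\<psi> \<in> FmS L (argTys L op 1)" "semM \<psi> = semM \<phi>"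
  shows "semM (F1 op \<psi>) = semM (F1 op \<phi>)"
  using assms unfolding inductive_prop_def by metis

lemma inductive_prop_F2_cong:
  assumes "inductive_prop L SEMM semM" "op \<in> Ops2 L"
    and "\<phi>1 \<in> FmS L (argTys L op 1)" "\<psi>1 \<in> FmS L (argTys L op 1)" "semM \<psi>1 = semM \<phi>1"
    and "\<phi>2 \<in> FmS L (argTys L op 2)" "\<psi>2 \<in> FmS L (argTys L op 2)" "semM \<psi>2 = semM \<phi>2"
  shows "semM (F2 op \<psi>1 \<psi>2) = semM (F2 op \<phi>1 \<phi>2)"
  using assms unfolding inductive_prop_def by metis

definition profile ::
  "('t, 'o) logic \<Rightarrow> ('m \<Rightarrow> 'o fm \<Rightarrow> 's) \<Rightarrow> 'm set \<Rightarrow> 'o fm \<Rightarrow> 't \<times> ('m \<Rightarrow> 's)" where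
  "profile L sem Q \<phi> = (fty L \<phi>, \<lambda>M\<in>Q. sem M \<phi>)"

definition profiles ::
  "('t, 'o) logic \<Rightarrow> ('m \<Rightarrow> 't \<Rightarrow> 's set) \<Rightarrow> 'm set \<Rightarrow> ('t \<times> ('m \<Rightarrow> 's)) set" where
  "profiles L SEM Q = (SIGMA \<tau>:Tys L. \<Pi>\<^sub>E M\<in>Q. SEM M \<tau>)"

lemma profile_eq_iff:
  "profile L sem Q \<psi> = profile L sem Q \<phi> \<longleftrightarrow>
     fty L \<psi> = fty L \<phi> \<and> (\<forall>M\<in>Q. sem M \<psi> = sem M \<phi>)"
  by (auto simp: profile_def restrict_def fun_eq_iff)

lemma LM_pair_finite_SEM: "LM_pair L SEMM semM \<Longrightarrow> \<tau> \<in> Tys L \<Longrightarrow> finite (SEMM \<tau>)"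
  unfolding LM_pair_def SEMS_def by (meson UN_upper finite_subset)

lemma
  assumes "finite (Tys L)" "finite Q" "\<forall>M\<in>Q. LM_pair L (SEM M) (sem M)"
  shows finite_profiles: "finite (profiles L SEM Q)"
    and card_profiles: "card (profiles L SEM Q) = (\<Sum>\<tau>\<in>Tys L. \<Prod>M\<in>Q. card (SEM M \<tau>))"
proof -
  have "finite (SEM M \<tau>)" if "M \<in> Q" "\<tau> \<in> Tys L" for M \<tau>
    using LM_pair_finite_SEM[OF assms(3)[rule_format, OF that(1)] that(2)] .
  then have fin: "\<forall>\<tau>\<in>Tys L. finite (\<Pi>\<^sub>E M\<in>Q. SEM M \<tau>)"
    using assms(2) by (simp add: finite_PiE)
  then show "finite (profiles L SEM Q)"
    unfolding profiles_def using assms(1) by (intro finite_SigmaI) auto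
  show "card (profiles L SEM Q) = (\<Sum>\<tau>\<in>Tys L. \<Prod>M\<in>Q. card (SEM M \<tau>))"
    unfolding profiles_def using assms(1,2) fin by (simp add: card_PiE)
qed

lemma profiles_of_wf:
  assumes "is_logic L" "\<forall>M\<in>Q. LM_pair L (SEM M) (sem M)"
  shows "profile L sem Q ` {\<phi>. wf L \<phi>} \<subseteq> profiles L SEM Q"
  using assms fty_in_Tys unfolding profiles_def profile_def LM_pair_def Fm_def by fastforce

definition fm_congruence :: "('t, 'o) logic \<Rightarrow> ('o fm \<Rightarrow> 'k) \<Rightarrow> bool" where
  "fm_congruence L key \<longleftrightarrow>
     (\<forall>op \<phi> \<psi>. wf L (F1 op \<phi>) \<longrightarrow> wf L \<psi> \<longrightarrow> key \<psi> = key \<phi> \<longrightarrow>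
        wf L (F1 op \<psi>) \<and> key (F1 op \<psi>) = key (F1 op \<phi>)) \<and>
     (\<forall>op \<phi>1 \<phi>2 \<psi>1 \<psi>2. wf L (F2 op \<phi>1 \<phi>2) \<longrightarrow> wf L \<psi>1 \<longrightarrow> wf L \<psi>2 \<longrightarrow>
        key \<psi>1 = key \<phi>1 \<longrightarrow> key \<psi>2 = key \<phi>2 \<longrightarrow>
        wf L (F2 op \<psi>1 \<psi>2) \<and> key (F2 op \<psi>1 \<psi>2) = key (F2 op \<phi>1 \<phi>2))"

lemma fm_congruence_profile:
  assumes ind: "\<forall>M\<in>Q. inductive_prop L (SEM M) (sem M)"
  shows "fm_congruence L (profile L sem Q)"
  unfolding fm_congruence_def
proof (rule conjI; intro allI impI)
  fix op \<phi> \<psi>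
  assume "wf L (F1 op \<phi>)" "wf L \<psi>" and eq: "profile L sem Q \<psi> = profile L sem Q \<phi>"
  then have op: "op \<in> Ops1 L" and args: "\<phi> \<in> FmS L (argTys L op 1)" "\<psi> \<in> FmS L (argTys L op 1)"
    by (auto simp: profile_eq_iff FmS_def Fm_def)
  have "sem M (F1 op \<psi>) = sem M (F1 op \<phi>)" if "M \<in> Q" for M
    using inductive_prop_F1_cong[OF ind[rule_format, OF that] op args] eq that
    by (simp add: profile_eq_iff)
  with \<open>wf L \<psi>\<close> op args
  show "wf L (F1 op \<psi>) \<and> profile L sem Q (F1 op \<psi>) = profile L sem Q (F1 op \<phi>)"
    by (auto simp: profile_eq_iff FmS_def Fm_def)
next
  fix op \<phi>1 \<phi>2 \<psi>1 \<psi>2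
  assume "wf L (F2 op \<phi>1 \<phi>2)" "wf L \<psi>1" "wf L \<psi>2"
    and eq1: "profile L sem Q \<psi>1 = profile L sem Q \<phi>1"
    and eq2: "profile L sem Q \<psi>2 = profile L sem Q \<phi>2"
  then have op: "op \<in> Ops2 L"
    and args1: "\<phi>1 \<in> FmS L (argTys L op 1)" "\<psi>1 \<in> FmS L (argTys L op 1)"
    and args2: "\<phi>2 \<in> FmS L (argTys L op 2)" "\<psi>2 \<in> FmS L (argTys L op 2)"
    by (auto simp: profile_eq_iff FmS_def Fm_def)
  have "sem M (F2 op \<psi>1 \<psi>2) = sem M (F2 op \<phi>1 \<phi>2)" if "M \<in> Q" for M
    using inductive_prop_F2_cong[OF ind[rule_format, OF that] op args1 _ args2] eq1 eq2 that
    by (simp add: profile_eq_iff)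
  with \<open>wf L \<psi>1\<close> \<open>wf L \<psi>2\<close> op args1 args2
  show "wf L (F2 op \<psi>1 \<psi>2) \<and> profile L sem Q (F2 op \<psi>1 \<psi>2) = profile L sem Q (F2 op \<phi>1 \<phi>2)"
    by (auto simp: profile_eq_iff FmS_def Fm_def)
qed

definition sub_closed_inj :: "('t, 'o) logic \<Rightarrow> ('o fm \<Rightarrow> 'k) \<Rightarrow> 'o fm set \<Rightarrow> bool" where
  "sub_closed_inj L key S \<longleftrightarrow> finite S \<and> (\<forall>s\<in>S. wf L s \<and> Sub s \<subseteq> S) \<and> inj_on key S"

lemma sub_closed_inj_card_le:
  assumes "sub_closed_inj L key S" "finite K" "key ` {\<phi>. wf L \<phi>} \<subseteq> K"
  shows "card S \<le> card K"
proof -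
  have "inj_on key S" "key ` S \<subseteq> K"
    using assms(1,3) by (auto simp: sub_closed_inj_def)
  then show ?thesis
    using assms(2) by (rule card_inj_on_le)
qed

lemma sub_closed_inj_insert:
  assumes "sub_closed_inj L key S" "wf L t" "Sub t \<subseteq> insert t S" "key t \<notin> key ` S"
  shows "sub_closed_inj L key (insert t S)"
  using assms by (auto simp: sub_closed_inj_def)

lemma ex_max_card_sub_closed_inj:
  assumes "finite K" "key ` {\<phi>. wf L \<phi>} \<subseteq> K"
  obtains S where "sub_closed_inj L key S"
    and "\<And>S'. sub_closed_inj L key S' \<Longrightarrow> card S' \<le> card S"
proof -
  have "sub_closed_inj L key {}"
    by (simp add: sub_closed_inj_def)
  moreover have "\<forall>S. sub_closed_inj L key S \<longrightarrow> card S < Suc (card K)"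
    using sub_closed_inj_card_le[OF _ assms] by (simp add: less_Suc_eq_le)
  ultimately show ?thesis
    using that Lattices_Big.ex_has_greatest_nat[where f = card] by metis
qed

lemma max_sub_closed_inj_represents:
  assumes S: "sub_closed_inj L key S"
    and max: "\<And>S'. sub_closed_inj L key S' \<Longrightarrow> card S' \<le> card S"
    and cong: "fm_congruence L key"
  shows "wf L \<phi> \<Longrightarrow> \<exists>s\<in>S. key s = key \<phi>"
proof -
  have finite: "finite S" and closed: "\<And>s. s \<in> S \<Longrightarrow> wf L s \<and> Sub s \<subseteq> S"
    using S by (auto simp: sub_closed_inj_def)
  have extend: "key t \<in> key ` S" if "wf L t" "Sub t \<subseteq> insert t S" for t
  proof (rule ccontr)
    assume "key t \<notin> key ` S"
    then have "t \<notin> S" "card (insert t S) \<le> card S"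
      using max sub_closed_inj_insert[OF S that] by auto
    then show False
      using finite by simp
  qed
  show "wf L \<phi> \<Longrightarrow> \<exists>s\<in>S. key s = key \<phi>"
  proof (induction \<phi>)
    case (F0 op)
    then show ?case
      using extend[of "F0 op"] by auto
  next
    case (F1 op \<phi>)
    then obtain \<psi> where "\<psi> \<in> S" "key \<psi> = key \<phi>"
      by auto
    then have "wf L (F1 op \<psi>)" "key (F1 op \<psi>) = key (F1 op \<phi>)"
      using cong F1.prems closed unfolding fm_congruence_def by blast+
    moreover have "Sub (F1 op \<psi>) \<subseteq> insert (F1 op \<psi>) S"
      using closed \<open>\<psi> \<in> S\<close> by auto
    ultimately show ?case
      using extend[of "F1 op \<psi>"] by (metis imageE)
  next
    case (F2 op \<phi>1 \<phi>2)
    then obtain \<psi>1 \<psi>2 where "\<psi>1 \<in> S" "key \<psi>1 = key \<phi>1" "\<psi>2 \<in> S" "key \<psi>2 = key \<phi>2"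
      by auto
    then have "wf L (F2 op \<psi>1 \<psi>2)" "key (F2 op \<psi>1 \<psi>2) = key (F2 op \<phi>1 \<phi>2)"
      using cong F2.prems closed unfolding fm_congruence_def by blast+
    moreover have "Sub (F2 op \<psi>1 \<psi>2) \<subseteq> insert (F2 op \<psi>1 \<psi>2) S"
      using closed \<open>\<psi>1 \<in> S\<close> \<open>\<psi>2 \<in> S\<close> by auto
    ultimately show ?case
      using extend[of "F2 op \<psi>1 \<psi>2"] by (metis imageE)
  qed
qed

lemma small_representative:
  assumes "finite K" "key ` {\<phi>. wf L \<phi>} \<subseteq> K" "fm_congruence L key" "wf L \<phi>"
  shows "\<exists>\<psi>. wf L \<psi> \<and> key \<psi> = key \<phi> \<and> sz \<psi> \<le> card K"
proof -
  obtain S where S: "sub_closed_inj L key S"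
    and max: "\<And>S'. sub_closed_inj L key S' \<Longrightarrow> card S' \<le> card S"
    using ex_max_card_sub_closed_inj[OF assms(1,2)] by blast
  obtain \<psi> where "\<psi> \<in> S" "key \<psi> = key \<phi>"
    using max_sub_closed_inj_represents[OF S max assms(3,4)] by blast
  moreover have "wf L \<psi>" "sz \<psi> \<le> card S"
    using S \<open>\<psi> \<in> S\<close> unfolding sub_closed_inj_def sz_def by (auto intro: card_mono)
  moreover have "card S \<le> card K"
    using sub_closed_inj_card_le[OF S assms(1,2)] .
  ultimately show ?thesis
    by auto
qed

lemma separating_profile_eq:
  assumes "is_logic L" "\<forall>M\<in>P \<union> N. captures L (sat M) (sem M)"
    and "separating L sat P N \<phi>" "wf L \<psi>"
    and "profile L sem (P \<union> N) \<psi> = profile L sem (P \<union> N) \<phi>"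
  shows "separating L sat P N \<psi>"
proof -
  have \<phi>: "\<phi> \<in> FinFm L" and ty: "fty L \<psi> = fty L \<phi>"
    and sem: "\<forall>M\<in>P \<union> N. sem M \<psi> = sem M \<phi>"
    using assms(3,5) by (auto simp: separating_def profile_eq_iff)
  have "\<psi> \<in> FinFm L"
    using \<phi> ty assms(4) by (simp add: FinFm_iff)
  moreover have "sat M \<psi> \<longleftrightarrow> sat M \<phi>" if "M \<in> P \<union> N" for M
    using captures_sat_eq[OF assms(1) _ \<phi> assms(4) ty] assms(2) sem that by blast
  ultimately show ?thesis
    using assms(3) unfolding separating_def by blast
qed

lemma small_separating_formula:
  assumes L: "is_logic L" and LC: "LC_pair L C sat SEM sem"
    and "finite P" "finite N" "P \<subseteq> C" "N \<subseteq> C"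
    and sep: "separating L sat P N \<phi>"
  shows "\<exists>\<psi>. separating L sat P N \<psi> \<and> sz \<psi> \<le> size_bound L SEM P N"
proof -
  define Q where "Q = P \<union> N"
  have Q: "finite Q" "Q \<subseteq> C"
    using assms(3-6) by (auto simp: Q_def)
  have LM: "\<forall>M\<in>Q. LM_pair L (SEM M) (sem M)"
    and cap: "\<forall>M\<in>Q. captures L (sat M) (sem M)"
    and ind: "\<forall>M\<in>Q. inductive_prop L (SEM M) (sem M)"
    using LC Q unfolding LC_pair_def by auto
  have fin: "finite (Tys L)"
    using L by (simp add: is_logic_def)
  have "wf L \<phi>"
    using sep by (simp add: separating_def FinFm_iff)
  then obtain \<psi> where "wf L \<psi>" "profile L sem Q \<psi> = profile L sem Q \<phi>"
    and "sz \<psi> \<le> card (profiles L SEM Q)"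
    using small_representative[OF finite_profiles[OF fin Q(1) LM] profiles_of_wf[OF L LM]
        fm_congruence_profile[OF ind]]
    by blast
  then show ?thesis
    using separating_profile_eq[OF L cap[unfolded Q_def] sep] card_profiles[OF fin Q(1) LM]
    unfolding Q_def size_bound_def by auto
qed

theorem theorem1:
  fixes L L' :: "('t, 'o) logic"
    and C P N :: "'m set"
    and sat :: "'m \<Rightarrow> 'o fm \<Rightarrow> bool"
    and SEM :: "'m \<Rightarrow> 't \<Rightarrow> 's set"
    and sem :: "'m \<Rightarrow> 'o fm \<Rightarrow> 's"
  assumes "is_logic L"
    and "LC_pair L C sat SEM sem"
    and "fragment L' L"
    and "finite P" and "finite N" and "P \<subseteq> C" and "N \<subseteq> C"
  shows "separable L' sat P N \<longleftrightarrow>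
         (\<exists>\<phi>. separating L' sat P N \<phi> \<and> sz \<phi> \<le> size_bound L SEM P N)"
proof
  assume "separable L' sat P N"
  then obtain \<phi> where sep: "separating L' sat P N \<phi>"
    by (auto simp: separable_def)
  have "is_logic L'"
    using assms(3) by (simp add: fragment_def)
  moreover have "LC_pair L' C sat SEM sem"
    using LC_pair_fragment[OF assms(3,2)] .
  ultimately obtain \<psi> where "separating L' sat P N \<psi>" "sz \<psi> \<le> size_bound L' SEM P N"
    using small_separating_formula[OF _ _ assms(4-7) sep] by blast
  then show "\<exists>\<phi>. separating L' sat P N \<phi> \<and> sz \<phi> \<le> size_bound L SEM P N"
    using size_bound_fragment[OF assms(3), of SEM P N] by metis
next
  assume "\<exists>\<phi>. separating L' sat P N \<phi> \<and> sz \<phi> \<le> size_bound L SEM P N"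
  then show "separable L' sat P N"
    by (auto simp: separable_def)
qed

end
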